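(* Let $a$ and $b$ be coprime odd integers and let $\beta\geq2$ be an integer. The following are equivalent: (1) $1\notin G_{(a,b)}(\beta)$; (2) $2^\beta\nmid(a+b)$; (3) $n\notin G_{(a,b)}(\beta)$ for all odd natural numbers $n$.
   Context: For coprime nonzero integers $a,b$ and an integer $\beta\geq0$, $G_{(a,b)}(\beta)$ is the set of positive integers $d$ such that $2^\beta d\mid(a^k+b^k)$ for some positive integer $k$. *)

theory Defs
  imports Main
begin

definition G :: "int \<Rightarrow> int \<Rightarrow> nat \<Rightarrow> nat set" where
  "G a b \<beta> = {d. d > 0 \<and> (\<exists>k::nat. k > 0 \<and> (2::int) ^ \<beta> * int d dvd a ^ k + b ^ k)}"

end

theory Submission
  imports Defs
begin

text \<open>For even \<open>k\<close> the number \<open>a\<^sup>k + b\<^sup>k\<close> is \<open>2\<close> modulo \<open>4\<close>, so no \<open>2\<^sup>\<beta>\<close> with \<open>\<beta> \<ge> 2\<close>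
  divides it. For odd \<open>k\<close> we have \<open>a\<^sup>k + b\<^sup>k = (a + b) q\<close> with an odd cofactor \<open>q\<close>, so
  \<open>a\<^sup>k + b\<^sup>k\<close> and \<open>a + b\<close> carry the same power of \<open>2\<close>. Hence \<open>2\<^sup>\<beta>\<close> divides some
  \<open>a\<^sup>k + b\<^sup>k\<close> exactly when it divides \<open>a + b\<close>; in that case \<open>1 \<in> G\<close>, and otherwise \<open>G\<close>
  is empty.\<close>

lemma odd_power_sum_eq_mult_odd:
  fixes a b :: int
  assumes "odd a" "odd b"
  shows "\<exists>q. odd q \<and> a ^ (2 * m + 1) + b ^ (2 * m + 1) = (a + b) * q"
proof (induction m)
  case 0
  show ?case by (rule exI[of _ 1]) simp
next
  case (Suc m)
  then obtain q where q: "odd q" "a ^ (2 * m + 1) + b ^ (2 * m + 1) = (a + b) * q"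
    by blast
  define r where "r = a\<^sup>2 * q + b ^ (2 * m + 1) * (b - a)"
  have "a ^ (2 * Suc m + 1) + b ^ (2 * Suc m + 1)
      = a\<^sup>2 * (a ^ (2 * m + 1) + b ^ (2 * m + 1)) + b ^ (2 * m + 1) * ((b - a) * (b + a))"
    by (simp add: algebra_simps power_add power2_eq_square)
  also have "\<dots> = (a + b) * r"
    unfolding q(2) r_def by (simp add: algebra_simps)
  finally have "a ^ (2 * Suc m + 1) + b ^ (2 * Suc m + 1) = (a + b) * r" .
  moreover have "odd r"
    unfolding r_def using q(1) assms by simp
  ultimately show ?case by (intro exI[of _ r] conjI)
qed

lemma odd_power_even_mod_4:
  fixes a :: int
  assumes "odd a"
  shows "a ^ (2 * m) mod 4 = 1"
proof -
  obtain c where c: "a = 2 * c + 1" using assms oddE by blast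
  define d where "d = c * c + c"
  have "a\<^sup>2 = 1 + d * 4"
    unfolding c d_def by (simp add: algebra_simps power2_eq_square)
  then have "a\<^sup>2 mod 4 = 1" by (simp only: mod_mult_self2) simp
  then have "(a\<^sup>2) ^ m mod 4 = 1 ^ m mod 4" by (metis power_mod)
  then show ?thesis by (simp add: power_mult)
qed

lemma four_not_dvd_even_power_sum:
  fixes a b :: int
  assumes "odd a" "odd b" "even k"
  shows "\<not> 4 dvd a ^ k + b ^ k"
proof -
  obtain m where k: "k = 2 * m" using \<open>even k\<close> by blast
  have "(a ^ k + b ^ k) mod 4 = 2"
    using odd_power_even_mod_4[OF assms(1), of m] odd_power_even_mod_4[OF assms(2), of m]
    unfolding k by (simp add: mod_add_eq[symmetric])
  then show ?thesis by auto
qed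

lemma pow2_dvd_odd_power_sum_iff:
  fixes a b :: int
  assumes "odd a" "odd b" "odd k"
  shows "(2::int) ^ \<beta> dvd a ^ k + b ^ k \<longleftrightarrow> (2::int) ^ \<beta> dvd a + b"
proof -
  obtain m where "k = 2 * m + 1" using \<open>odd k\<close> oddE by blast
  then obtain q where q: "odd q" "a ^ k + b ^ k = (a + b) * q"
    using odd_power_sum_eq_mult_odd[OF assms(1,2)] by blast
  have "coprime ((2::int) ^ \<beta>) q" using q(1) by simp
  then show ?thesis
    unfolding q(2) using coprime_dvd_mult_left_iff by blast
qed

lemma pow2_dvd_power_sum_iff:
  fixes a b :: int
  assumes "odd a" "odd b" "\<beta> \<ge> 2"
  shows "(2::int) ^ \<beta> dvd a ^ k + b ^ k \<longleftrightarrow> odd k \<and> (2::int) ^ \<beta> dvd a + b"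
proof (cases "even k")
  case True
  have "4 dvd (2::int) ^ \<beta>"
    using le_imp_power_dvd[OF \<open>\<beta> \<ge> 2\<close>, of "2::int"] by simp
  then show ?thesis
    using four_not_dvd_even_power_sum[OF assms(1,2) True] True dvd_trans by blast
next
  case False
  then show ?thesis using pow2_dvd_odd_power_sum_iff[OF assms(1,2)] by blast
qed

lemma one_mem_G_iff:
  assumes "odd a" "odd b" "\<beta> \<ge> 2"
  shows "1 \<in> G a b \<beta> \<longleftrightarrow> (2::int) ^ \<beta> dvd a + b"
proof
  assume "1 \<in> G a b \<beta>"
  then obtain k where "(2::int) ^ \<beta> dvd a ^ k + b ^ k" unfolding G_def by auto
  then show "(2::int) ^ \<beta> dvd a + b" using pow2_dvd_power_sum_iff[OF assms] by blast
next
  assume "(2::int) ^ \<beta> dvd a + b"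
  then show "1 \<in> G a b \<beta>" unfolding G_def by (auto intro!: exI[of _ 1])
qed

lemma G_empty_if_not_dvd:
  assumes "odd a" "odd b" "\<beta> \<ge> 2" "\<not> (2::int) ^ \<beta> dvd a + b"
  shows "G a b \<beta> = {}"
proof -
  have "n \<notin> G a b \<beta>" for n
  proof
    assume "n \<in> G a b \<beta>"
    then obtain k where "(2::int) ^ \<beta> * int n dvd a ^ k + b ^ k"
      unfolding G_def by blast
    then have "(2::int) ^ \<beta> dvd a ^ k + b ^ k" using dvd_mult_left by blast
    then show False using pow2_dvd_power_sum_iff[OF assms(1-3)] assms(4) by blast
  qed
  then show ?thesis by blast
qed

theorem corollary2p10:
  fixes a b :: int and \<beta> :: nat
  assumes "coprime a b" and "odd a" and "odd b" and "\<beta> \<ge> 2"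
  shows "((1::nat) \<notin> G a b \<beta> \<longleftrightarrow> \<not> ((2::int) ^ \<beta> dvd a + b))
       \<and> (\<not> ((2::int) ^ \<beta> dvd a + b) \<longleftrightarrow> (\<forall>n::nat. odd n \<longrightarrow> n \<notin> G a b \<beta>))"
proof -
  have one: "1 \<in> G a b \<beta> \<longleftrightarrow> (2::int) ^ \<beta> dvd a + b"
    using one_mem_G_iff[OF assms(2-4)] .
  have "(\<forall>n::nat. odd n \<longrightarrow> n \<notin> G a b \<beta>) \<longleftrightarrow> \<not> (2::int) ^ \<beta> dvd a + b"
  proof
    assume "\<forall>n::nat. odd n \<longrightarrow> n \<notin> G a b \<beta>"
    then have "1 \<notin> G a b \<beta>" by simp
    then show "\<not> (2::int) ^ \<beta> dvd a + b" using one by simp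
  next
    assume "\<not> (2::int) ^ \<beta> dvd a + b"
    then show "\<forall>n::nat. odd n \<longrightarrow> n \<notin> G a b \<beta>"
      using G_empty_if_not_dvd[OF assms(2-4)] by simp
  qed
  with one show ?thesis by simp
qed

end
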